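(* Let $u$ be a drift function, $\alpha>0$, $g\in\mathcal E^{2+\alpha}_u$ and $x\in\mathbf X$. Write $h_k=g(X_{k+1})-Pg(X_k)$. Then for every $\varepsilon>0$, \[\frac1n\sum_{k=0}^{n-1}\mathbb E_x\big(h_k^2\mathbf 1_{\{|h_k|\ge\varepsilon\sqrt n\}}\big)\xrightarrow[n\to\infty]{}0\quad\text{and}\quad\sum_{n=1}^{\infty}\frac1{\sqrt n}\mathbb E_x\big(|h_n|\mathbf 1_{\{|h_n|\ge\varepsilon\sqrt n\}}\big)<\infty,\] and there exists $\delta>0$ such that \[\sum_{n=1}^\infty\frac1{n^2}\mathbb E_x\big(h_n^4\mathbf 1_{\{|h_n|\le\delta\sqrt n\}}\big)<\infty.\]
   Context: $(X_n)$ Markov chain on a complete separable metric space $\mathbf X$, $\mathbb P_x$ its law from $x$, $Pf(x)=\mathbb E_xf(X_1)$. $\tau$ is a $\theta$-compatible stopping time ($\mathbb P_x(\tau=0)=0$ and $\mathbb P_x$-a.s. $\tau\ge2\Rightarrow\tau\circ\theta=\tau-1$) with $\mathbb E_x\tau<\infty$ for all $x$; $Qf(x)=\mathbb E_x[f(X_\tau)\mathbf 1_{\tau<\infty}]$. A drift function is a Borel $u:\mathbf X\to[1,\infty)$ such that $u-Pu$ is bounded below and $Qu$, $x\mapsto\mathbb E_x\tau/u(x)$ and $P(u-Pu+B_u)/(u-Pu+B_u)$ are bounded on $\mathbf X$, where $B_u=\sup(Pu-u)+1$. For Borel $v\ge1$ and $p\ge1$, $\mathcal F^p_v$ is the space of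 Borel $f$ with $\sup|f|^p/v<\infty$; $\mathcal E^p_u:=\mathcal F^p_{u-Pu+B_u}$. *)

theory Defs
  imports "HOL-Probability.Probability"
begin

definition path_space :: "(nat \<Rightarrow> 'a::topological_space) measure" where
  "path_space = PiM UNIV (\<lambda>_. borel)"

text \<open>M x is the law P_x of a time-homogeneous Markov chain started at x
  (coordinate process on the path space); measurable in x; Markov property
  with transition kernel given by the law of the first step.\<close>
definition markov_family :: "('a::polish_space \<Rightarrow> (nat \<Rightarrow> 'a) measure) \<Rightarrow> bool" where
  "markov_family M \<longleftrightarrow>
     M \<in> borel \<rightarrow>\<^sub>M prob_algebra path_space \<and>
     (\<forall>x. AE \<omega> in M x. \<omega> 0 = x) \<and>
     (\<forall>x n (F :: (nat \<Rightarrow> 'a) \<Rightarrow> real) (f :: 'a \<Rightarrow> real).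
        F \<in> borel_measurable (PiM {..n} (\<lambda>_. borel)) \<and> (\<exists>C. \<forall>y. \<bar>F y\<bar> \<le> C) \<and>
        f \<in> borel_measurable borel \<and> (\<exists>C. \<forall>y. \<bar>f y\<bar> \<le> C) \<longrightarrow>
        (\<integral>\<omega>. F (restrict \<omega> {..n}) * f (\<omega> (Suc n)) \<partial>M x) =
        (\<integral>\<omega>. F (restrict \<omega> {..n}) * (\<integral>\<omega>'. f (\<omega>' 1) \<partial>M (\<omega> n)) \<partial>M x))"

definition shift :: "(nat \<Rightarrow> 'a) \<Rightarrow> (nat \<Rightarrow> 'a)" where
  "shift \<omega> = (\<lambda>k. \<omega> (Suc k))"

definition nat_stopping_time :: "((nat \<Rightarrow> 'a::topological_space) \<Rightarrow> enat) \<Rightarrow> bool" where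
  "nat_stopping_time \<tau> \<longleftrightarrow>
     (\<forall>n. \<exists>A \<in> sets (PiM {..n} (\<lambda>_. (borel :: 'a measure))).
        \<forall>\<omega>. \<tau> \<omega> \<le> enat n \<longleftrightarrow> restrict \<omega> {..n} \<in> A)"

definition theta_compatible :: "('a \<Rightarrow> (nat \<Rightarrow> 'a) measure) \<Rightarrow> ((nat \<Rightarrow> 'a) \<Rightarrow> enat) \<Rightarrow> bool" where
  "theta_compatible M \<tau> \<longleftrightarrow>
     (\<forall>x. AE \<omega> in M x. \<tau> \<omega> \<noteq> 0) \<and>
     (\<forall>x. AE \<omega> in M x. 2 \<le> \<tau> \<omega> \<longrightarrow> \<tau> (shift \<omega>) = \<tau> \<omega> - 1)"

definition Pop :: "('a \<Rightarrow> (nat \<Rightarrow> 'a) measure) \<Rightarrow> ('a \<Rightarrow> real) \<Rightarrow> 'a \<Rightarrow> real" where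
  "Pop M f x = (\<integral>\<omega>. f (\<omega> 1) \<partial>M x)"

definition Ppos :: "('a \<Rightarrow> (nat \<Rightarrow> 'a) measure) \<Rightarrow> ('a \<Rightarrow> real) \<Rightarrow> 'a \<Rightarrow> ennreal" where
  "Ppos M f x = (\<integral>\<^sup>+\<omega>. ennreal (f (\<omega> 1)) \<partial>M x)"

definition Qpos :: "('a \<Rightarrow> (nat \<Rightarrow> 'a) measure) \<Rightarrow> ((nat \<Rightarrow> 'a) \<Rightarrow> enat) \<Rightarrow> ('a \<Rightarrow> real) \<Rightarrow> 'a \<Rightarrow> ennreal" where
  "Qpos M \<tau> f x = (\<integral>\<^sup>+\<omega>. (case \<tau> \<omega> of enat k \<Rightarrow> ennreal (f (\<omega> k)) | \<infinity> \<Rightarrow> 0) \<partial>M x)"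

definition Bconst :: "('a \<Rightarrow> (nat \<Rightarrow> 'a) measure) \<Rightarrow> ('a \<Rightarrow> real) \<Rightarrow> real" where
  "Bconst M u = Sup (range (\<lambda>x. Pop M u x - u x)) + 1"

definition wfun :: "('a \<Rightarrow> (nat \<Rightarrow> 'a) measure) \<Rightarrow> ('a \<Rightarrow> real) \<Rightarrow> 'a \<Rightarrow> real" where
  "wfun M u x = u x - Pop M u x + Bconst M u"

definition drift_function ::
  "('a::polish_space \<Rightarrow> (nat \<Rightarrow> 'a) measure) \<Rightarrow> ((nat \<Rightarrow> 'a) \<Rightarrow> enat) \<Rightarrow> ('a \<Rightarrow> real) \<Rightarrow> bool" where
  "drift_function M \<tau> u \<longleftrightarrow>
     u \<in> borel_measurable borel \<and> (\<forall>x. 1 \<le> u x) \<and>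
     (\<forall>x. integrable (M x) (\<lambda>\<omega>. u (\<omega> 1))) \<and>
     bdd_below (range (\<lambda>x. u x - Pop M u x)) \<and>
     (\<exists>C. \<forall>x. Qpos M \<tau> u x \<le> ennreal C) \<and>
     (\<exists>C. \<forall>x. (\<integral>\<^sup>+\<omega>. ennreal_of_enat (\<tau> \<omega>) \<partial>M x) \<le> ennreal C * ennreal (u x)) \<and>
     (\<exists>C. \<forall>x. Ppos M (wfun M u) x \<le> ennreal C * ennreal (wfun M u x))"

definition Fspace :: "real \<Rightarrow> ('a::topological_space \<Rightarrow> real) \<Rightarrow> ('a \<Rightarrow> real) set" where
  "Fspace p v = {f. f \<in> borel_measurable borel \<and> (\<exists>C. \<forall>x. \<bar>f x\<bar> powr p / v x \<le> C)}"

definition Espace :: "('a::polish_space \<Rightarrow> (nat \<Rightarrow> 'a) measure) \<Rightarrow> ('a \<Rightarrow> real) \<Rightarrow> real \<Rightarrow> ('a \<Rightarrow> real) set" where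
  "Espace M u p = Fspace p (wfun M u)"

end

theory Submission
  imports Defs
begin

text \<open>
  Let p = 2 + \<alpha>, w = u - Pu + B_u and h_k = g(X_(k+1)) - Pg(X_k). Since |g|^p \<le> C w, Jensen's
  inequality gives |Pg|^p \<le> C Pw, and by the Markov property E_x Pw(X_k) = E_x w(X_(k+1)); so
  E_x |h_k|^p is at most a constant times E_x w(X_(k+1)). Since also
  E_x w(X_k) = E_x u(X_k) - E_x u(X_(k+1)) + B_u, the sums of E_x w(X_k) over k < n telescope to
  at most u(x) + n B_u: the p-th moments of the increments have linearly growing partial sums.

  The three statements only use this. On {|h| \<ge> e} one has h^2 \<le> e^(-\<alpha>) |h|^p and
  |h| \<le> e^(-1-\<alpha>) |h|^p, and on {|h| \<le> sqrt n} one has h^4 \<le> n^(1-\<beta>/2) (1 + |h|^p), \<beta> = min \<alpha> 2.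
  Hence the Lindeberg average is O(n^(-\<alpha>/2)), and both series are dominated by series
  \<Sum> a_n n^(-s) with s > 1 and partial sums of a_n growing linearly, which converge by
  summation by parts.
\<close>

section \<open>Inequalities and summation by parts\<close>

lemma powr_add_le_two_powr:
  fixes a b p :: real
  assumes "0 \<le> a" "0 \<le> b" "0 < p"
  shows "(a + b) powr p \<le> 2 powr p * (a powr p + b powr p)"
proof -
  have "(a + b) powr p \<le> (2 * max a b) powr p"
    using assms by (intro powr_mono2) auto
  also have "\<dots> = 2 powr p * max a b powr p"
    using assms by (simp add: powr_mult)
  also have "\<dots> \<le> 2 powr p * (a powr p + b powr p)"
    by (intro mult_left_mono) (auto simp: max_def)
  finally show ?thesis .
qed

lemma sqrt_powr: "0 \<le> m \<Longrightarrow> sqrt m powr a = m powr (a / 2)"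
  by (simp add: powr_half_sqrt[symmetric] powr_powr)

lemma square_le_powr_above_threshold:
  fixes h e \<alpha> :: real
  assumes "0 < e" "e \<le> \<bar>h\<bar>" "0 < \<alpha>"
  shows "h\<^sup>2 \<le> e powr (- \<alpha>) * \<bar>h\<bar> powr (2 + \<alpha>)"
proof -
  have "h\<^sup>2 * e powr \<alpha> \<le> \<bar>h\<bar> powr 2 * \<bar>h\<bar> powr \<alpha>"
    using assms by (intro mult_mono powr_mono2) (auto simp: powr_numeral)
  also have "\<dots> = \<bar>h\<bar> powr (2 + \<alpha>)" by (simp add: powr_add)
  finally show ?thesis using assms by (simp add: powr_minus field_simps)
qed

lemma abs_le_powr_above_threshold:
  fixes h e \<alpha> :: real
  assumes "0 < e" "e \<le> \<bar>h\<bar>" "0 < \<alpha>"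
  shows "\<bar>h\<bar> \<le> e powr (- (1 + \<alpha>)) * \<bar>h\<bar> powr (2 + \<alpha>)"
proof -
  have "\<bar>h\<bar> * e powr (1 + \<alpha>) \<le> \<bar>h\<bar> powr 1 * \<bar>h\<bar> powr (1 + \<alpha>)"
    using assms by (intro mult_mono powr_mono2) auto
  also have "\<dots> = \<bar>h\<bar> powr (1 + (1 + \<alpha>))" by (simp only: powr_add)
  also have "\<dots> = \<bar>h\<bar> powr (2 + \<alpha>)" by simp
  finally have "\<bar>h\<bar> \<le> \<bar>h\<bar> powr (2 + \<alpha>) / e powr (1 + \<alpha>)"
    using assms by (simp add: field_simps)
  then show ?thesis by (simp only: powr_minus_divide) simp
qed

lemma power4_le_powr_below_sqrt:
  fixes h m \<alpha> :: real
  assumes m: "1 \<le> m" and h: "\<bar>h\<bar> \<le> sqrt m" and \<alpha>: "0 < \<alpha>"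
  shows "h ^ 4 \<le> m powr (1 - min \<alpha> 2 / 2) * (1 + \<bar>h\<bar> powr (2 + \<alpha>))"
proof (cases "\<bar>h\<bar> \<le> 1")
  case True
  have "h ^ 4 = \<bar>h\<bar> ^ 4" by simp
  also have "\<dots> \<le> 1" using True by (intro power_le_one) auto
  also have "1 \<le> m powr (1 - min \<alpha> 2 / 2)"
    using m by (intro ge_one_powr_ge_zero) auto
  also have "\<dots> \<le> m powr (1 - min \<alpha> 2 / 2) * (1 + \<bar>h\<bar> powr (2 + \<alpha>))"
    using m by (intro mult_le_cancel_left1[THEN iffD2]) auto
  finally show ?thesis .
next
  case False
  define \<beta> where "\<beta> = min \<alpha> 2"
  have \<beta>: "0 \<le> 2 - \<beta>" "\<beta> \<le> \<alpha>" unfolding \<beta>_def by auto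
  have "h ^ 4 = \<bar>h\<bar> powr (real 4)"
    using False by (subst powr_realpow) auto
  also have "\<dots> = \<bar>h\<bar> powr (2 - \<beta>) * \<bar>h\<bar> powr (2 + \<beta>)"
    by (simp flip: powr_add)
  also have "\<dots> \<le> sqrt m powr (2 - \<beta>) * \<bar>h\<bar> powr (2 + \<alpha>)"
    using False \<beta> h by (intro mult_mono powr_mono2 powr_mono) auto
  also have "sqrt m powr (2 - \<beta>) = m powr (1 - \<beta> / 2)"
    using m by (simp add: sqrt_powr diff_divide_distrib)
  also have "m powr (1 - \<beta> / 2) * \<bar>h\<bar> powr (2 + \<alpha>) \<le> m powr (1 - \<beta> / 2) * (1 + \<bar>h\<bar> powr (2 + \<alpha>))"
    by (intro mult_left_mono) auto
  finally show ?thesis unfolding \<beta>_def .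
qed

lemma ennreal_SUP_min_real:
  assumes "0 \<le> (a::real)"
  shows "(SUP m. ennreal (min a (real m))) = ennreal a"
proof (rule antisym)
  show "(SUP m. ennreal (min a (real m))) \<le> ennreal a"
    by (rule SUP_least) (simp add: ennreal_leI)
  obtain m where "a \<le> real m" using real_arch_simple by blast
  then show "ennreal a \<le> (SUP m. ennreal (min a (real m)))"
    by (metis SUP_upper UNIV_I min.absorb1)
qed

lemma summable_mult_antimono_of_linear_sums:
  fixes a c :: "nat \<Rightarrow> real"
  assumes a0: "\<And>k. 0 \<le> a k" and c0: "\<And>k. 0 \<le> c k" and c_dec: "\<And>k. c (Suc k) \<le> c k"
    and c: "summable c" and a: "\<And>n. (\<Sum>k<n. a k) \<le> L * (real n + 1)"
  shows "summable (\<lambda>k. a k * c k)"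
proof -
  define S where "S n = (\<Sum>k<n. a k)" for n
  have L0: "0 \<le> L" using a[of 0] by simp
  have by_parts: "(\<Sum>k<n. a k * c k) = c n * S n + (\<Sum>k<n. (c k - c (Suc k)) * S (Suc k))" for n
    by (induction n) (auto simp: S_def algebra_simps)
  have telescope: "(\<Sum>k<n. (c k - c (Suc k)) * (real k + 2)) + (real n + 1) * c n = c 0 + (\<Sum>k<n. c k)" for n
    by (induction n) (auto simp: algebra_simps)
  have "(\<Sum>k<n. a k * c k) \<le> L * (c 0 + suminf c)" for n
  proof -
    have "(\<Sum>k<n. a k * c k)
        \<le> c n * (L * (real n + 1)) + (\<Sum>k<n. (c k - c (Suc k)) * (L * (real (Suc k) + 1)))"
      unfolding by_parts S_def using a[of "Suc _"] a c0 c_dec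
      by (intro add_mono sum_mono mult_left_mono) (auto simp: algebra_simps)
    also have "\<dots> = L * ((\<Sum>k<n. (c k - c (Suc k)) * (real k + 2)) + (real n + 1) * c n)"
      by (simp add: sum_distrib_left algebra_simps)
    also have "\<dots> = L * (c 0 + (\<Sum>k<n. c k))"
      by (simp add: telescope)
    also have "\<dots> \<le> L * (c 0 + suminf c)"
      using c0 L0 by (intro mult_left_mono add_left_mono sum_le_suminf c) auto
    finally show ?thesis .
  qed
  then show ?thesis
    by (rule summableI_nonneg_bounded[rotated]) (simp add: a0 c0)
qed

lemma summable_Suc_powr_weighted_of_linear_sums:
  fixes a :: "nat \<Rightarrow> real"
  assumes "\<And>k. 0 \<le> a k" and "\<And>n. (\<Sum>k<n. a k) \<le> L * (real n + 1)" and "1 < s"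
  shows "summable (\<lambda>k. a k * real (Suc k) powr (- s))"
proof (rule summable_mult_antimono_of_linear_sums[OF assms(1) _ _ _ assms(2)])
  show "real (Suc (Suc k)) powr (- s) \<le> real (Suc k) powr (- s)" for k
    using assms(3) by (intro powr_mono2') auto
  have "summable (\<lambda>k::nat. real k powr (- s))"
    using assms(3) by (simp add: summable_real_powr_iff)
  then show "summable (\<lambda>k. real (Suc k) powr (- s))"
    by (subst summable_Suc_iff) simp
qed simp

lemma (in prob_space) shifted_powr_integral_le:
  fixes f v :: "'a \<Rightarrow> real"
  assumes p: "1 \<le> p" and f: "integrable M f" and v: "integrable M v"
    and fv: "\<And>\<omega>. (\<bar>f \<omega>\<bar> + 1) powr p \<le> v \<omega>"
  shows "(\<bar>integral\<^sup>L M f\<bar> + 1) powr p \<le> integral\<^sup>L M v"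
proof -
  have f1: "integrable M (\<lambda>\<omega>. \<bar>f \<omega>\<bar> + 1)"
    using f by simp
  have fp: "integrable M (\<lambda>\<omega>. (\<bar>f \<omega>\<bar> + 1) powr p)"
    using borel_measurable_integrable[OF f]
    by (intro Bochner_Integration.integrable_bound[OF v])
      (auto intro!: AE_I2 intro: order_trans[OF fv abs_ge_self])
  have "\<bar>integral\<^sup>L M f\<bar> + 1 \<le> (\<integral>\<omega>. \<bar>f \<omega>\<bar> + 1 \<partial>M)"
    using integral_norm_bound[of M f] f by (simp add: prob_space)
  then have "(\<bar>integral\<^sup>L M f\<bar> + 1) powr p \<le> (\<integral>\<omega>. \<bar>f \<omega>\<bar> + 1 \<partial>M) powr p"
    using p by (intro powr_mono2) auto
  \<comment> \<open>the shift by 1 keeps Jensen's inequality inside \<open>{0<..}\<close>, where \<open>powr_convex\<close> applies\<close>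
  also have "\<dots> \<le> (\<integral>\<omega>. (\<bar>f \<omega>\<bar> + 1) powr p \<partial>M)"
    by (rule jensens_inequality[where I="{0<..}" and q="\<lambda>t. t powr p", OF f1 _ _ fp powr_convex[OF p]])
      (auto intro!: AE_I2 simp: add_pos_nonneg)
  also have "\<dots> \<le> integral\<^sup>L M v"
    by (rule integral_mono[OF fp v fv])
  finally show ?thesis .
qed

lemma integral_le_of_moment_bound:
  fixes t q :: "'b \<Rightarrow> real"
  assumes N: "prob_space N" and tq: "\<And>\<omega>. t \<omega> \<le> b * (d + q \<omega>)"
    and b: "0 \<le> b" and d: "0 \<le> d" and q: "\<And>\<omega>. 0 \<le> q \<omega>" "q \<in> borel_measurable N"
    and r: "(\<integral>\<^sup>+\<omega>. ennreal (q \<omega>) \<partial>N) \<le> ennreal r" "0 \<le> r"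
  shows "integral\<^sup>L N t \<le> b * (d + r)"
proof (rule integral_real_bounded)
  interpret prob_space N by (rule N)
  show "0 \<le> b * (d + r)" using b d r(2) by simp
  have "(\<integral>\<^sup>+\<omega>. ennreal (t \<omega>) \<partial>N) \<le> (\<integral>\<^sup>+\<omega>. ennreal (b * d) + ennreal b * ennreal (q \<omega>) \<partial>N)"
    using tq b d q(1) by (intro nn_integral_mono) (simp add: ennreal_leI distrib_left flip: ennreal_plus ennreal_mult)
  also have "\<dots> = ennreal (b * d) + ennreal b * (\<integral>\<^sup>+\<omega>. ennreal (q \<omega>) \<partial>N)"
    using q(2) by (simp add: nn_integral_add nn_integral_cmult emeasure_space_1)
  also have "\<dots> \<le> ennreal (b * d) + ennreal b * ennreal r"
    by (intro add_left_mono mult_left_mono r(1)) auto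
  also have "\<dots> = ennreal (b * (d + r))"
    using b d r(2) by (simp add: distrib_left ennreal_mult ennreal_plus)
  finally show "integral\<^sup>N N t \<le> ennreal (b * (d + r))" .
qed

section \<open>Markov families\<close>

lemma markov_family_prob_space:
  assumes "markov_family M"
  shows "prob_space (M y)" and "sets (M y) = sets path_space"
proof -
  have "M \<in> borel \<rightarrow>\<^sub>M prob_algebra path_space"
    using assms unfolding markov_family_def by blast
  then have "M y \<in> space (prob_algebra path_space)"
    by (rule measurable_space) simp
  then show "prob_space (M y)" "sets (M y) = sets path_space"
    by (auto simp: space_prob_algebra)
qed

lemma measurable_path_coordinate:
  "(\<lambda>\<omega>. \<omega> k) \<in> path_space \<rightarrow>\<^sub>M (borel :: 'a::topological_space measure)"
  unfolding path_space_def by (rule measurable_component_singleton) simp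

lemma markov_family_measurable_coordinate:
  assumes "markov_family M"
  shows "(\<lambda>\<omega>. \<omega> k) \<in> M y \<rightarrow>\<^sub>M borel"
  using measurable_path_coordinate markov_family_prob_space(2)[OF assms]
  by (simp cong: measurable_cong_sets)

lemma measurable_Pop:
  assumes mf: "markov_family M" and f: "f \<in> borel_measurable borel"
  shows "Pop M f \<in> borel_measurable borel"
proof -
  have "M \<in> borel \<rightarrow>\<^sub>M subprob_algebra path_space"
    using mf unfolding markov_family_def by (blast intro: measurable_prob_algebraD)
  moreover have "(\<lambda>\<omega>. f (\<omega> 1)) \<in> borel_measurable path_space"
    using measurable_compose[OF measurable_path_coordinate f] .
  ultimately show ?thesis
    unfolding Pop_def using measurable_compose[OF _ integral_measurable_subprob_algebra]
    by (simp add: comp_def)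
qed

lemma measurable_Ppos:
  assumes mf: "markov_family M" and f: "f \<in> borel_measurable borel"
  shows "Ppos M f \<in> borel_measurable borel"
proof -
  have "M \<in> borel \<rightarrow>\<^sub>M subprob_algebra path_space"
    using mf unfolding markov_family_def by (blast intro: measurable_prob_algebraD)
  moreover have "(\<lambda>\<omega>. ennreal (f (\<omega> 1))) \<in> borel_measurable path_space"
    using measurable_compose[OF measurable_path_coordinate f] by simp
  ultimately show ?thesis
    unfolding Ppos_def using measurable_compose[OF _ nn_integral_measurable_subprob_algebra]
    by (simp add: comp_def)
qed

lemma markov_family_integrable_bounded:
  fixes f :: "'a::polish_space \<Rightarrow> real"
  assumes mf: "markov_family M" and f: "f \<in> borel_measurable borel" and B: "\<And>y. \<bar>f y\<bar> \<le> B"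
  shows "integrable (M y) (\<lambda>\<omega>. f (\<omega> k))"
proof -
  interpret prob_space "M y" by (rule markov_family_prob_space[OF mf])
  show ?thesis
    using B measurable_compose[OF markov_family_measurable_coordinate[OF mf] f]
    by (intro integrable_const_bound[where B=B]) auto
qed

lemma Pop_nonneg: "(\<And>y. 0 \<le> f y) \<Longrightarrow> 0 \<le> Pop M f x"
  unfolding Pop_def by (simp add: Bochner_Integration.integral_nonneg)

lemma abs_Pop_le:
  fixes f :: "'a::polish_space \<Rightarrow> real"
  assumes mf: "markov_family M" and f: "f \<in> borel_measurable borel" and B: "\<And>y. \<bar>f y\<bar> \<le> B"
  shows "\<bar>Pop M f x\<bar> \<le> B"
proof -
  interpret prob_space "M x" by (rule markov_family_prob_space[OF mf])
  have "\<bar>Pop M f x\<bar> \<le> (\<integral>\<omega>. \<bar>f (\<omega> 1)\<bar> \<partial>M x)"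
    unfolding Pop_def using integral_norm_bound[of "M x" "\<lambda>\<omega>. f (\<omega> 1)"] by simp
  also have "\<dots> \<le> B"
    using markov_family_integrable_bounded[OF mf f B] B by (intro integral_le_const) auto
  finally show ?thesis .
qed

lemma Ppos_eq_Pop:
  assumes "integrable (M y) (\<lambda>\<omega>. f (\<omega> 1))" and "\<And>z. 0 \<le> f z"
  shows "Ppos M f y = ennreal (Pop M f y)"
  unfolding Ppos_def Pop_def by (rule nn_integral_eq_integral) (use assms in auto)

lemma markov_integral_Suc:
  fixes f :: "'a::polish_space \<Rightarrow> real"
  assumes mf: "markov_family M" and f: "f \<in> borel_measurable borel" and B: "\<And>y. \<bar>f y\<bar> \<le> B"
  shows "(\<integral>\<omega>. f (\<omega> (Suc n)) \<partial>M x) = (\<integral>\<omega>. Pop M f (\<omega> n) \<partial>M x)"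
proof -
  have markov: "\<And>F. F \<in> borel_measurable (PiM {..n} (\<lambda>_. borel)) \<and> (\<exists>C. \<forall>y. \<bar>F y\<bar> \<le> C) \<and>
        f \<in> borel_measurable borel \<and> (\<exists>C. \<forall>y. \<bar>f y\<bar> \<le> C) \<Longrightarrow>
        (\<integral>\<omega>. F (restrict \<omega> {..n}) * f (\<omega> (Suc n)) \<partial>M x) =
        (\<integral>\<omega>. F (restrict \<omega> {..n}) * (\<integral>\<omega>'. f (\<omega>' 1) \<partial>M (\<omega> n)) \<partial>M x)"
    using mf unfolding markov_family_def by blast
  show ?thesis
    using markov[of "\<lambda>_. 1"] f B unfolding Pop_def by auto
qed

lemma markov_nn_integral_Suc_bounded:
  fixes f :: "'a::polish_space \<Rightarrow> real"
  assumes mf: "markov_family M" and f: "f \<in> borel_measurable borel"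
    and f0: "\<And>y. 0 \<le> f y" and B: "\<And>y. \<bar>f y\<bar> \<le> B"
  shows "(\<integral>\<^sup>+\<omega>. ennreal (f (\<omega> (Suc n))) \<partial>M x) = (\<integral>\<^sup>+\<omega>. Ppos M f (\<omega> n) \<partial>M x)"
proof -
  have Pf: "Pop M f \<in> borel_measurable borel" "\<And>y. \<bar>Pop M f y\<bar> \<le> B"
    using measurable_Pop[OF mf f] abs_Pop_le[OF mf f B] by auto
  have "(\<integral>\<^sup>+\<omega>. ennreal (f (\<omega> (Suc n))) \<partial>M x) = ennreal (\<integral>\<omega>. f (\<omega> (Suc n)) \<partial>M x)"
    by (rule nn_integral_eq_integral[OF markov_family_integrable_bounded[OF mf f B]]) (simp add: f0)
  also have "\<dots> = ennreal (\<integral>\<omega>. Pop M f (\<omega> n) \<partial>M x)"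
    by (simp add: markov_integral_Suc[OF mf f B])
  also have "\<dots> = (\<integral>\<^sup>+\<omega>. ennreal (Pop M f (\<omega> n)) \<partial>M x)"
    by (rule nn_integral_eq_integral[symmetric, OF markov_family_integrable_bounded[OF mf Pf]])
      (simp add: Pop_nonneg f0)
  also have "\<dots> = (\<integral>\<^sup>+\<omega>. Ppos M f (\<omega> n) \<partial>M x)"
    by (simp add: Ppos_eq_Pop markov_family_integrable_bounded[OF mf f B] f0)
  finally show ?thesis .
qed

lemma markov_nn_integral_Suc:
  assumes mf: "markov_family M" and f: "f \<in> borel_measurable borel" and f0: "\<And>y. 0 \<le> f y"
  shows "(\<integral>\<^sup>+\<omega>. ennreal (f (\<omega> (Suc n))) \<partial>M x) = (\<integral>\<^sup>+\<omega>. Ppos M f (\<omega> n) \<partial>M x)"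
proof -
  \<comment> \<open>\<open>markov_family\<close> states the Markov property only for bounded functions: truncate and
    pass to the limit by monotone convergence\<close>
  define t where "t m y = min (f y) (real m)" for m y
  have t: "t m \<in> borel_measurable borel" "\<And>y. 0 \<le> t m y" "\<And>y. \<bar>t m y\<bar> \<le> real m" for m
    unfolding t_def using f f0 by auto
  have coord: "(\<lambda>\<omega>. \<omega> k) \<in> M y \<rightarrow>\<^sub>M borel" for k y
    by (rule markov_family_measurable_coordinate[OF mf])
  have inc: "incseq (\<lambda>m \<omega>. ennreal (t m (\<omega> k)))" for k
    by (intro incseq_SucI le_funI) (simp add: t_def ennreal_leI)
  have sup: "(SUP m. ennreal (t m y)) = ennreal (f y)" for y
    unfolding t_def by (rule ennreal_SUP_min_real[OF f0])
  have lim: "(\<integral>\<^sup>+\<omega>. ennreal (f (\<omega> k)) \<partial>M y) = (SUP m. \<integral>\<^sup>+\<omega>. ennreal (t m (\<omega> k)) \<partial>M y)" for k y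
  proof -
    have "(\<integral>\<^sup>+\<omega>. ennreal (f (\<omega> k)) \<partial>M y) = (\<integral>\<^sup>+\<omega>. (SUP m. ennreal (t m (\<omega> k))) \<partial>M y)"
      by (simp add: sup)
    also have "\<dots> = (SUP m. \<integral>\<^sup>+\<omega>. ennreal (t m (\<omega> k)) \<partial>M y)"
      using inc measurable_compose[OF coord t(1)] by (intro nn_integral_monotone_convergence_SUP) auto
    finally show ?thesis .
  qed
  have "(\<integral>\<^sup>+\<omega>. ennreal (f (\<omega> (Suc n))) \<partial>M x) = (SUP m. \<integral>\<^sup>+\<omega>. ennreal (t m (\<omega> (Suc n))) \<partial>M x)"
    by (rule lim)
  also have "\<dots> = (SUP m. \<integral>\<^sup>+\<omega>. Ppos M (t m) (\<omega> n) \<partial>M x)"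
    by (simp only: markov_nn_integral_Suc_bounded[OF mf t])
  also have "\<dots> = (\<integral>\<^sup>+\<omega>. (SUP m. Ppos M (t m) (\<omega> n)) \<partial>M x)"
  proof (rule nn_integral_monotone_convergence_SUP[symmetric])
    show "incseq (\<lambda>m \<omega>. Ppos M (t m) (\<omega> n))"
      unfolding Ppos_def t_def by (auto simp: incseq_def le_fun_def intro!: nn_integral_mono ennreal_leI)
  qed (use measurable_compose[OF coord measurable_Ppos[OF mf t(1)]] in simp)
  also have "\<dots> = (\<integral>\<^sup>+\<omega>. Ppos M f (\<omega> n) \<partial>M x)"
    unfolding Ppos_def by (simp add: lim)
  finally show ?thesis .
qed

lemma markov_drift_step:
  fixes u :: "'a::polish_space \<Rightarrow> real"
  assumes mf: "markov_family M"
    and u: "u \<in> borel_measurable borel" "\<And>y. 0 \<le> u y" "\<And>y. integrable (M y) (\<lambda>\<omega>. u (\<omega> 1))"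
    and c: "0 \<le> c" "\<And>y. Pop M u y \<le> u y + c"
  shows "(\<integral>\<^sup>+\<omega>. ennreal (u (\<omega> k) - Pop M u (\<omega> k) + c) \<partial>M x) + (\<integral>\<^sup>+\<omega>. ennreal (u (\<omega> (Suc k))) \<partial>M x)
    = (\<integral>\<^sup>+\<omega>. ennreal (u (\<omega> k)) \<partial>M x) + ennreal c"
proof -
  interpret prob_space "M x" by (rule markov_family_prob_space[OF mf])
  have coord: "(\<lambda>\<omega>. \<omega> k) \<in> M x \<rightarrow>\<^sub>M borel"
    by (rule markov_family_measurable_coordinate[OF mf])
  have "(\<integral>\<^sup>+\<omega>. ennreal (u (\<omega> (Suc k))) \<partial>M x) = (\<integral>\<^sup>+\<omega>. ennreal (Pop M u (\<omega> k)) \<partial>M x)"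
    unfolding markov_nn_integral_Suc[OF mf u(1,2)] using Ppos_eq_Pop[OF u(3,2)] by simp
  then have "(\<integral>\<^sup>+\<omega>. ennreal (u (\<omega> k) - Pop M u (\<omega> k) + c) \<partial>M x) + (\<integral>\<^sup>+\<omega>. ennreal (u (\<omega> (Suc k))) \<partial>M x)
      = (\<integral>\<^sup>+\<omega>. ennreal (u (\<omega> k) - Pop M u (\<omega> k) + c) + ennreal (Pop M u (\<omega> k)) \<partial>M x)"
    using measurable_compose[OF coord measurable_Pop[OF mf u(1)]] measurable_compose[OF coord u(1)]
    by (simp add: nn_integral_add)
  also have "\<dots> = (\<integral>\<^sup>+\<omega>. ennreal (u (\<omega> k)) + ennreal c \<partial>M x)"
  proof (intro nn_integral_cong)
    fix \<omega>
    have "0 \<le> u (\<omega> k) - Pop M u (\<omega> k) + c" "0 \<le> Pop M u (\<omega> k)"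
      using c(2)[of "\<omega> k"] Pop_nonneg[of u] u(2) by auto
    then show "ennreal (u (\<omega> k) - Pop M u (\<omega> k) + c) + ennreal (Pop M u (\<omega> k))
        = ennreal (u (\<omega> k)) + ennreal c"
      using u(2) c(1) by (simp flip: ennreal_plus)
  qed
  also have "\<dots> = (\<integral>\<^sup>+\<omega>. ennreal (u (\<omega> k)) \<partial>M x) + ennreal c"
    using measurable_compose[OF coord u(1)] by (simp add: nn_integral_add emeasure_space_1)
  finally show ?thesis .
qed

lemma markov_drift_sum_le:
  fixes u :: "'a::polish_space \<Rightarrow> real"
  assumes mf: "markov_family M"
    and u: "u \<in> borel_measurable borel" "\<And>y. 0 \<le> u y" "\<And>y. integrable (M y) (\<lambda>\<omega>. u (\<omega> 1))"
    and c: "0 \<le> c" "\<And>y. Pop M u y \<le> u y + c"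
  shows "(\<Sum>k<n. \<integral>\<^sup>+\<omega>. ennreal (u (\<omega> k) - Pop M u (\<omega> k) + c) \<partial>M x) \<le> ennreal (u x + real n * c)"
proof -
  interpret prob_space "M x" by (rule markov_family_prob_space[OF mf])
  define W where "W k = (\<integral>\<^sup>+\<omega>. ennreal (u (\<omega> k) - Pop M u (\<omega> k) + c) \<partial>M x)" for k
  define U where "U k = (\<integral>\<^sup>+\<omega>. ennreal (u (\<omega> k)) \<partial>M x)" for k
  have U0: "U 0 = ennreal (u x)"
  proof -
    have "AE \<omega> in M x. \<omega> 0 = x" using mf unfolding markov_family_def by blast
    then have "U 0 = (\<integral>\<^sup>+\<omega>. ennreal (u x) \<partial>M x)"
      unfolding U_def by (intro nn_integral_cong_AE) auto
    then show ?thesis by (simp add: emeasure_space_1)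
  qed
  have "(\<Sum>k<n. W k) + U n = ennreal (u x) + of_nat n * ennreal c"
  proof (induction n)
    case (Suc n)
    have "(\<Sum>k<Suc n. W k) + U (Suc n) = (\<Sum>k<n. W k) + U n + ennreal c"
      unfolding W_def U_def by (simp add: add.assoc markov_drift_step[OF mf u c])
    also have "\<dots> = ennreal (u x) + of_nat (Suc n) * ennreal c"
      using Suc by (simp add: distrib_right add.assoc)
    finally show ?case .
  qed (simp add: U0)
  also have "\<dots> = ennreal (u x + real n * c)"
    using u(2)[of x] c(1) by (simp add: ennreal_of_nat_eq_real_of_nat ennreal_mult)
  finally have "(\<Sum>k<n. W k) + U n = ennreal (u x + real n * c)" .
  moreover have "(\<Sum>k<n. W k) \<le> (\<Sum>k<n. W k) + U n"
    by (rule add_increasing2[OF zero_le order_refl])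
  ultimately show ?thesis
    unfolding W_def by simp
qed

section \<open>Sequences with linearly growing moment sums\<close>

definition linear_moment_growth :: "real \<Rightarrow> 'b measure \<Rightarrow> (nat \<Rightarrow> 'b \<Rightarrow> real) \<Rightarrow> bool" where
  "linear_moment_growth p N h \<longleftrightarrow>
     (\<exists>a L. (\<forall>k. 0 \<le> a k \<and> (\<integral>\<^sup>+\<omega>. ennreal (\<bar>h k \<omega>\<bar> powr p) \<partial>N) \<le> ennreal (a k)) \<and>
            0 \<le> L \<and> (\<forall>n. (\<Sum>k<n. a k) \<le> L * (real n + 1)))"

lemma linear_moment_growthI:
  assumes "\<And>k. 0 \<le> a k" "\<And>k. (\<integral>\<^sup>+\<omega>. ennreal (\<bar>h k \<omega>\<bar> powr p) \<partial>N) \<le> ennreal (a k)"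
    and "0 \<le> L" "\<And>n. (\<Sum>k<n. a k) \<le> L * (real n + 1)"
  shows "linear_moment_growth p N h"
  using assms unfolding linear_moment_growth_def by blast

lemma linear_moment_growth_Suc:
  assumes "linear_moment_growth p N h"
  shows "linear_moment_growth p N (\<lambda>k. h (Suc k))"
proof -
  obtain a L where a: "\<And>k. 0 \<le> a k" "\<And>k. (\<integral>\<^sup>+\<omega>. ennreal (\<bar>h k \<omega>\<bar> powr p) \<partial>N) \<le> ennreal (a k)"
    and L: "0 \<le> L" "\<And>n. (\<Sum>k<n. a k) \<le> L * (real n + 1)"
    using assms unfolding linear_moment_growth_def by blast
  have "(\<Sum>k<n. a (Suc k)) \<le> 2 * L * (real n + 1)" for n
  proof -
    have "(\<Sum>k<n. a (Suc k)) \<le> (\<Sum>k<Suc n. a k)"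
      by (simp only: sum.lessThan_Suc_shift) (simp add: a(1))
    also have "\<dots> \<le> L * (real (Suc n) + 1)" by (rule L(2))
    also have "\<dots> \<le> 2 * L * (real n + 1)" using L(1) by (simp add: algebra_simps)
    finally show ?thesis .
  qed
  then show ?thesis using a L(1) by (intro linear_moment_growthI[where a="\<lambda>k. a (Suc k)" and L="2 * L"]) auto
qed

lemma lindeberg_average_tendsto_zero:
  fixes h :: "nat \<Rightarrow> 'b \<Rightarrow> real"
  assumes N: "prob_space N" and \<alpha>: "0 < \<alpha>" and h: "\<And>k. h k \<in> borel_measurable N"
    and growth: "linear_moment_growth (2 + \<alpha>) N h" and \<epsilon>: "0 < \<epsilon>"
  shows "(\<lambda>n. (1 / real n) *
           (\<Sum>k<n. \<integral>\<omega>. (if \<bar>h k \<omega>\<bar> \<ge> \<epsilon> * sqrt (real n) then (h k \<omega>)\<^sup>2 else 0) \<partial>N))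
         \<longlonglongrightarrow> 0"
proof -
  obtain a L where a: "\<And>k. 0 \<le> a k" "\<And>k. (\<integral>\<^sup>+\<omega>. ennreal (\<bar>h k \<omega>\<bar> powr (2 + \<alpha>)) \<partial>N) \<le> ennreal (a k)"
    and L: "0 \<le> L" "\<And>n. (\<Sum>k<n. a k) \<le> L * (real n + 1)"
    using growth unfolding linear_moment_growth_def by blast
  have bound: "norm ((1 / real n) *
        (\<Sum>k<n. \<integral>\<omega>. (if \<bar>h k \<omega>\<bar> \<ge> \<epsilon> * sqrt (real n) then (h k \<omega>)\<^sup>2 else 0) \<partial>N))
      \<le> 2 * L * (\<epsilon> powr (- \<alpha>) * real n powr (- \<alpha> / 2))" if n: "1 \<le> n" for n
  proof -
    let ?e = "\<epsilon> * sqrt (real n)"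
    have e: "0 < ?e"
      using \<epsilon> n by simp
    have trunc: "(\<integral>\<omega>. (if \<bar>h k \<omega>\<bar> \<ge> ?e then (h k \<omega>)\<^sup>2 else 0) \<partial>N) \<le> ?e powr (- \<alpha>) * (0 + a k)" for k
      using square_le_powr_above_threshold[OF e _ \<alpha>] h a
      by (intro integral_le_of_moment_bound[OF N, where q="\<lambda>\<omega>. \<bar>h k \<omega>\<bar> powr (2 + \<alpha>)"]) auto
    have avg: "(1 / real n) * (\<Sum>k<n. a k) \<le> 2 * L"
    proof -
      have "(\<Sum>k<n. a k) \<le> L * (2 * real n)"
        using L(2)[of n] mult_left_mono[of "real n + 1" "2 * real n" L] L(1) n by simp
      then show ?thesis using n by (simp add: field_simps)
    qed
    have "norm ((1 / real n) * (\<Sum>k<n. \<integral>\<omega>. (if \<bar>h k \<omega>\<bar> \<ge> ?e then (h k \<omega>)\<^sup>2 else 0) \<partial>N))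
        = (1 / real n) * (\<Sum>k<n. \<integral>\<omega>. (if \<bar>h k \<omega>\<bar> \<ge> ?e then (h k \<omega>)\<^sup>2 else 0) \<partial>N)"
      by (simp add: sum_nonneg Bochner_Integration.integral_nonneg)
    also have "\<dots> \<le> (1 / real n) * (\<Sum>k<n. ?e powr (- \<alpha>) * a k)"
      using trunc by (intro mult_left_mono sum_mono) auto
    also have "\<dots> = ?e powr (- \<alpha>) * ((1 / real n) * (\<Sum>k<n. a k))"
      by (simp add: sum_distrib_left)
    also have "\<dots> \<le> ?e powr (- \<alpha>) * (2 * L)"
      using avg by (intro mult_left_mono) auto
    also have "?e powr (- \<alpha>) = \<epsilon> powr (- \<alpha>) * real n powr (- \<alpha> / 2)"
      using \<epsilon> by (simp add: powr_mult sqrt_powr)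
    finally show ?thesis
      by (simp only: mult_ac)
  qed
  show ?thesis
  proof (rule Lim_null_comparison)
    show "(\<lambda>n. 2 * L * (\<epsilon> powr (- \<alpha>) * real n powr (- \<alpha> / 2))) \<longlonglongrightarrow> 0"
      using \<alpha> by (intro tendsto_mult_right_zero tendsto_neg_powr filterlim_real_sequentially) simp
  qed (use bound in \<open>rule eventually_sequentiallyI\<close>)
qed

lemma tail_series_summable:
  fixes h :: "nat \<Rightarrow> 'b \<Rightarrow> real"
  assumes N: "prob_space N" and \<alpha>: "0 < \<alpha>" and h: "\<And>k. h k \<in> borel_measurable N"
    and growth: "linear_moment_growth (2 + \<alpha>) N h" and \<epsilon>: "0 < \<epsilon>"
  shows "summable (\<lambda>n. (1 / sqrt (real (Suc n))) *
           (\<integral>\<omega>. (if \<bar>h n \<omega>\<bar> \<ge> \<epsilon> * sqrt (real (Suc n)) then \<bar>h n \<omega>\<bar> else 0) \<partial>N))"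
proof -
  obtain a L where a: "\<And>k. 0 \<le> a k" "\<And>k. (\<integral>\<^sup>+\<omega>. ennreal (\<bar>h k \<omega>\<bar> powr (2 + \<alpha>)) \<partial>N) \<le> ennreal (a k)"
    and L: "\<And>n. (\<Sum>k<n. a k) \<le> L * (real n + 1)"
    using growth unfolding linear_moment_growth_def by blast
  have "summable (\<lambda>n. \<epsilon> powr (- (1 + \<alpha>)) * (a n * real (Suc n) powr (- (1 + \<alpha> / 2))))"
    using summable_Suc_powr_weighted_of_linear_sums[OF a(1) L, of "1 + \<alpha> / 2"] \<alpha>
    by (intro summable_mult) simp
  then show ?thesis
  proof (rule summable_comparison_test')
    fix n :: nat
    let ?m = "real (Suc n)"
    let ?e = "\<epsilon> * sqrt ?m"
    have e: "0 < ?e"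
      using \<epsilon> by simp
    have trunc: "(\<integral>\<omega>. (if \<bar>h n \<omega>\<bar> \<ge> ?e then \<bar>h n \<omega>\<bar> else 0) \<partial>N) \<le> ?e powr (- (1 + \<alpha>)) * (0 + a n)"
      using abs_le_powr_above_threshold[OF e _ \<alpha>] h a
      by (intro integral_le_of_moment_bound[OF N, where q="\<lambda>\<omega>. \<bar>h n \<omega>\<bar> powr (2 + \<alpha>)"]) auto
    have weight: "1 / sqrt ?m * ?e powr (- (1 + \<alpha>)) = \<epsilon> powr (- (1 + \<alpha>)) * ?m powr (- (1 + \<alpha> / 2))"
    proof -
      have "1 / sqrt ?m = ?m powr (- 1 / 2)"
        by (simp add: powr_minus_divide powr_half_sqrt)
      moreover have "?e powr (- (1 + \<alpha>)) = \<epsilon> powr (- (1 + \<alpha>)) * ?m powr (- (1 + \<alpha>) / 2)"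
        using \<epsilon> by (simp add: powr_mult sqrt_powr)
      ultimately have "1 / sqrt ?m * ?e powr (- (1 + \<alpha>))
          = \<epsilon> powr (- (1 + \<alpha>)) * (?m powr (- 1 / 2) * ?m powr (- (1 + \<alpha>) / 2))"
        by simp
      also have "?m powr (- 1 / 2) * ?m powr (- (1 + \<alpha>) / 2) = ?m powr (- 1 / 2 + - (1 + \<alpha>) / 2)"
        by (simp only: powr_add)
      also have "- 1 / 2 + - (1 + \<alpha>) / 2 = - (1 + \<alpha> / 2)"
        by (simp add: field_simps)
      finally show ?thesis .
    qed
    have "norm (1 / sqrt ?m * (\<integral>\<omega>. (if \<bar>h n \<omega>\<bar> \<ge> ?e then \<bar>h n \<omega>\<bar> else 0) \<partial>N))
        = 1 / sqrt ?m * (\<integral>\<omega>. (if \<bar>h n \<omega>\<bar> \<ge> ?e then \<bar>h n \<omega>\<bar> else 0) \<partial>N)"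
      by (simp add: Bochner_Integration.integral_nonneg)
    also have "\<dots> \<le> 1 / sqrt ?m * (?e powr (- (1 + \<alpha>)) * a n)"
      using trunc by (intro mult_left_mono) auto
    also have "\<dots> = \<epsilon> powr (- (1 + \<alpha>)) * (a n * ?m powr (- (1 + \<alpha> / 2)))"
      using weight by (simp only: mult.assoc[symmetric]) (simp only: mult_ac)
    finally show "norm (1 / sqrt ?m * (\<integral>\<omega>. (if \<bar>h n \<omega>\<bar> \<ge> ?e then \<bar>h n \<omega>\<bar> else 0) \<partial>N))
        \<le> \<epsilon> powr (- (1 + \<alpha>)) * (a n * ?m powr (- (1 + \<alpha> / 2)))" .
  qed
qed

lemma truncated_fourth_moment_series_summable:
  fixes h :: "nat \<Rightarrow> 'b \<Rightarrow> real"
  assumes N: "prob_space N" and \<alpha>: "0 < \<alpha>" and h: "\<And>k. h k \<in> borel_measurable N"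
    and growth: "linear_moment_growth (2 + \<alpha>) N h"
  shows "summable (\<lambda>n. (1 / (real (Suc n))\<^sup>2) *
           (\<integral>\<omega>. (if \<bar>h n \<omega>\<bar> \<le> sqrt (real (Suc n)) then (h n \<omega>) ^ 4 else 0) \<partial>N))"
proof -
  obtain a L where a: "\<And>k. 0 \<le> a k" "\<And>k. (\<integral>\<^sup>+\<omega>. ennreal (\<bar>h k \<omega>\<bar> powr (2 + \<alpha>)) \<partial>N) \<le> ennreal (a k)"
    and L: "\<And>n. (\<Sum>k<n. a k) \<le> L * (real n + 1)"
    using growth unfolding linear_moment_growth_def by blast
  define \<beta> where "\<beta> = min \<alpha> 2"
  have "(\<Sum>k<n. 1 + a k) \<le> (L + 1) * (real n + 1)" for n
    using L[of n] by (simp add: sum.distrib algebra_simps)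
  then have "summable (\<lambda>n. (1 + a n) * real (Suc n) powr (- (1 + \<beta> / 2)))"
    using a(1) \<alpha> unfolding \<beta>_def
    by (intro summable_Suc_powr_weighted_of_linear_sums[where L="L + 1"]) (auto intro: add_nonneg_nonneg)
  then show ?thesis
  proof (rule summable_comparison_test')
    fix n :: nat
    let ?m = "real (Suc n)"
    have m: "1 \<le> ?m" by simp
    have trunc: "(\<integral>\<omega>. (if \<bar>h n \<omega>\<bar> \<le> sqrt ?m then (h n \<omega>) ^ 4 else 0) \<partial>N)
        \<le> ?m powr (1 - \<beta> / 2) * (1 + a n)"
      using power4_le_powr_below_sqrt[OF m _ \<alpha>] h a unfolding \<beta>_def
      by (intro integral_le_of_moment_bound[OF N, where q="\<lambda>\<omega>. \<bar>h n \<omega>\<bar> powr (2 + \<alpha>)"]) auto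
    have weight: "1 / ?m\<^sup>2 * ?m powr (1 - \<beta> / 2) = ?m powr (- (1 + \<beta> / 2))"
    proof -
      have "1 / ?m\<^sup>2 * ?m powr (1 - \<beta> / 2) = ?m powr (1 - \<beta> / 2) / ?m powr 2"
        by (simp add: powr_numeral)
      also have "\<dots> = ?m powr (1 - \<beta> / 2 - 2)"
        by (simp only: powr_diff)
      also have "1 - \<beta> / 2 - 2 = - (1 + \<beta> / 2)"
        by simp
      finally show ?thesis .
    qed
    have "norm (1 / ?m\<^sup>2 * (\<integral>\<omega>. (if \<bar>h n \<omega>\<bar> \<le> sqrt ?m then (h n \<omega>) ^ 4 else 0) \<partial>N))
        = 1 / ?m\<^sup>2 * (\<integral>\<omega>. (if \<bar>h n \<omega>\<bar> \<le> sqrt ?m then (h n \<omega>) ^ 4 else 0) \<partial>N)"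
      by (simp add: Bochner_Integration.integral_nonneg)
    also have "\<dots> \<le> 1 / ?m\<^sup>2 * (?m powr (1 - \<beta> / 2) * (1 + a n))"
      using trunc by (intro mult_left_mono) auto
    also have "\<dots> = (1 + a n) * ?m powr (- (1 + \<beta> / 2))"
      using weight by (simp only: mult.assoc[symmetric]) (simp only: mult_ac)
    finally show "norm (1 / ?m\<^sup>2 * (\<integral>\<omega>. (if \<bar>h n \<omega>\<bar> \<le> sqrt ?m then (h n \<omega>) ^ 4 else 0) \<partial>N))
        \<le> (1 + a n) * ?m powr (- (1 + \<beta> / 2))" .
  qed
qed

section \<open>Moments of the increments of the chain\<close>

lemma wfun_ge_one:
  assumes "bdd_below (range (\<lambda>y. u y - Pop M u y))"
  shows "1 \<le> wfun M u y"
proof -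
  have "bdd_above (range (\<lambda>y. Pop M u y - u y))"
    using assms bdd_above_uminus_image[of "\<lambda>y. u y - Pop M u y" UNIV] by simp
  then have "Pop M u y - u y \<le> Bconst M u - 1"
    unfolding Bconst_def by (simp add: cSup_upper)
  then show ?thesis unfolding wfun_def by simp
qed

lemma Fspace_shifted_powr_le:
  fixes f v :: "'a::topological_space \<Rightarrow> real"
  assumes f: "f \<in> Fspace p v" and p: "0 < p" and v: "\<And>y. 1 \<le> v y"
  shows "\<exists>D\<ge>0. \<forall>y. (\<bar>f y\<bar> + 1) powr p \<le> D * v y"
proof -
  obtain C where C: "\<And>y. \<bar>f y\<bar> powr p / v y \<le> C"
    using f unfolding Fspace_def by auto
  have fC: "\<bar>f y\<bar> powr p \<le> C * v y" for y
    using C[of y] v[of y] by (simp add: divide_le_eq)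
  have C0: "0 \<le> C"
    using C[of undefined] v[of undefined] by (smt (verit) divide_nonneg_nonneg powr_ge_zero)
  have "(\<bar>f y\<bar> + 1) powr p \<le> (2 powr p * (C + 1)) * v y" for y
  proof -
    have "(\<bar>f y\<bar> + 1) powr p \<le> 2 powr p * (\<bar>f y\<bar> powr p + 1)"
      using powr_add_le_two_powr[of "\<bar>f y\<bar>" 1 p] p by simp
    also have "\<dots> \<le> 2 powr p * (C * v y + v y)"
      using fC[of y] v[of y] by (intro mult_left_mono) auto
    finally show ?thesis by (simp add: algebra_simps)
  qed
  with C0 show ?thesis by (intro exI[of _ "2 powr p * (C + 1)"]) auto
qed

lemma markov_increment_powr_le:
  fixes g v :: "'a::polish_space \<Rightarrow> real"
  assumes mf: "markov_family M" and p: "1 \<le> p"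
    and v: "\<And>y. integrable (M y) (\<lambda>\<omega>. v (\<omega> 1))"
    and g: "g \<in> borel_measurable borel" and gv: "\<And>y. (\<bar>g y\<bar> + 1) powr p \<le> v y"
  shows "\<bar>g y' - Pop M g y\<bar> powr p \<le> 2 powr p * (v y' + Pop M v y)"
proof -
  have gv': "\<bar>g z\<bar> \<le> v z" for z
  proof -
    have "\<bar>g z\<bar> + 1 \<le> (\<bar>g z\<bar> + 1) powr p"
      using p powr_mono[of 1 p "\<bar>g z\<bar> + 1"] by simp
    then show ?thesis using gv[of z] by simp
  qed
  have Pg: "(\<bar>Pop M g y\<bar> + 1) powr p \<le> Pop M v y"
  proof -
    interpret prob_space "M y" by (rule markov_family_prob_space[OF mf])
    have "integrable (M y) (\<lambda>\<omega>. g (\<omega> 1))"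
      using measurable_compose[OF markov_family_measurable_coordinate[OF mf] g]
      by (intro Bochner_Integration.integrable_bound[OF v])
        (auto intro!: AE_I2 intro: order_trans[OF gv' abs_ge_self])
    then show ?thesis
      unfolding Pop_def using gv by (intro shifted_powr_integral_le[OF p _ v])
  qed
  let ?a = "\<bar>g y'\<bar> + 1" and ?b = "\<bar>Pop M g y\<bar> + 1"
  have "\<bar>g y' - Pop M g y\<bar> powr p \<le> (?a + ?b) powr p"
    using p by (intro powr_mono2) auto
  also have "\<dots> \<le> 2 powr p * (?a powr p + ?b powr p)"
    using p by (intro powr_add_le_two_powr) auto
  also have "\<dots> \<le> 2 powr p * (v y' + Pop M v y)"
    using gv Pg by (intro mult_left_mono add_mono) auto
  finally show ?thesis .
qed

lemma markov_increment_moment_le: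
  fixes g v :: "'a::polish_space \<Rightarrow> real"
  assumes mf: "markov_family M" and p: "1 \<le> p"
    and v: "v \<in> borel_measurable borel" "\<And>y. integrable (M y) (\<lambda>\<omega>. v (\<omega> 1))"
    and g: "g \<in> borel_measurable borel" and gv: "\<And>y. (\<bar>g y\<bar> + 1) powr p \<le> v y"
  shows "(\<integral>\<^sup>+\<omega>. ennreal (\<bar>g (\<omega> (Suc k)) - Pop M g (\<omega> k)\<bar> powr p) \<partial>M x)
    \<le> ennreal (2 * 2 powr p) * (\<integral>\<^sup>+\<omega>. ennreal (v (\<omega> (Suc k))) \<partial>M x)"
proof -
  have coord: "(\<lambda>\<omega>. \<omega> k) \<in> M x \<rightarrow>\<^sub>M borel" for k
    by (rule markov_family_measurable_coordinate[OF mf])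
  have v0: "0 \<le> v y" for y
    using gv[of y] powr_ge_zero[of "\<bar>g y\<bar> + 1" p] by linarith
  note pointwise = markov_increment_powr_le[OF mf p v(2) g gv]
  have "(\<integral>\<^sup>+\<omega>. ennreal (\<bar>g (\<omega> (Suc k)) - Pop M g (\<omega> k)\<bar> powr p) \<partial>M x)
      \<le> (\<integral>\<^sup>+\<omega>. ennreal (2 powr p) * (ennreal (v (\<omega> (Suc k))) + ennreal (Pop M v (\<omega> k))) \<partial>M x)"
  proof (intro nn_integral_mono)
    fix \<omega>
    have "ennreal (2 powr p) * (ennreal (v (\<omega> (Suc k))) + ennreal (Pop M v (\<omega> k)))
        = ennreal (2 powr p * (v (\<omega> (Suc k)) + Pop M v (\<omega> k)))"
      using v0 Pop_nonneg[of v M, OF v0] by (simp add: ennreal_mult ennreal_plus)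
    then show "ennreal (\<bar>g (\<omega> (Suc k)) - Pop M g (\<omega> k)\<bar> powr p)
        \<le> ennreal (2 powr p) * (ennreal (v (\<omega> (Suc k))) + ennreal (Pop M v (\<omega> k)))"
      using pointwise[of "\<omega> (Suc k)" "\<omega> k"] by (simp add: ennreal_leI)
  qed
  also have "\<dots> = ennreal (2 powr p) * ((\<integral>\<^sup>+\<omega>. ennreal (v (\<omega> (Suc k))) \<partial>M x)
      + (\<integral>\<^sup>+\<omega>. ennreal (Pop M v (\<omega> k)) \<partial>M x))"
    using measurable_compose[OF coord v(1)] measurable_compose[OF coord measurable_Pop[OF mf v(1)]]
    by (simp add: nn_integral_cmult nn_integral_add)
  also have "(\<integral>\<^sup>+\<omega>. ennreal (Pop M v (\<omega> k)) \<partial>M x) = (\<integral>\<^sup>+\<omega>. ennreal (v (\<omega> (Suc k))) \<partial>M x)"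
    unfolding markov_nn_integral_Suc[OF mf v(1) v0] using Ppos_eq_Pop[OF v(2) v0] by simp
  also have "ennreal (2 powr p) * (V + V) = ennreal (2 * 2 powr p) * V" for V
    by (simp add: ennreal_mult mult_2_right[symmetric] mult_ac)
  finally show ?thesis .
qed

lemma markov_increment_linear_moment_growth_of_weight:
  fixes g w :: "'a::polish_space \<Rightarrow> real"
  assumes mf: "markov_family M" and p: "1 \<le> p"
    and w: "w \<in> borel_measurable borel" "\<And>y. 0 \<le> w y" "\<And>y. integrable (M y) (\<lambda>\<omega>. w (\<omega> 1))"
    and g: "g \<in> borel_measurable borel" and D: "0 \<le> D" "\<And>y. (\<bar>g y\<bar> + 1) powr p \<le> D * w y"
    and sums: "\<And>n. (\<Sum>k<n. \<integral>\<^sup>+\<omega>. ennreal (w (\<omega> k)) \<partial>M x) \<le> ennreal (A + real n * B)"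
    and AB: "0 \<le> A" "0 \<le> B"
  shows "linear_moment_growth p (M x) (\<lambda>k \<omega>. g (\<omega> (Suc k)) - Pop M g (\<omega> k))"
proof -
  define W where "W k = (\<integral>\<^sup>+\<omega>. ennreal (w (\<omega> k)) \<partial>M x)" for k
  have W_finite: "W k < \<top>" for k
  proof -
    have "W k \<le> (\<Sum>j<Suc k. W j)" by (intro member_le_sum) auto
    also have "\<dots> \<le> ennreal (A + real (Suc k) * B)" unfolding W_def by (rule sums)
    finally show ?thesis using ennreal_less_top by (rule le_less_trans)
  qed
  define a where "a k = 2 * 2 powr p * D * enn2real (W (Suc k))" for k
  show ?thesis
  proof (rule linear_moment_growthI[where a=a and L="2 * 2 powr p * D * (A + B)"])
    show "0 \<le> 2 * 2 powr p * D * (A + B)"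
      using D(1) AB by simp
    show "0 \<le> a k" for k
      unfolding a_def using D(1) by simp
    show "(\<integral>\<^sup>+\<omega>. ennreal (\<bar>g (\<omega> (Suc k)) - Pop M g (\<omega> k)\<bar> powr p) \<partial>M x) \<le> ennreal (a k)" for k
    proof -
      have "(\<integral>\<^sup>+\<omega>. ennreal (\<bar>g (\<omega> (Suc k)) - Pop M g (\<omega> k)\<bar> powr p) \<partial>M x)
          \<le> ennreal (2 * 2 powr p) * (\<integral>\<^sup>+\<omega>. ennreal (D * w (\<omega> (Suc k))) \<partial>M x)"
        using w(1,3) by (intro markov_increment_moment_le[OF mf p _ _ g D(2)]) auto
      also have "(\<integral>\<^sup>+\<omega>. ennreal (D * w (\<omega> (Suc k))) \<partial>M x)
          = (\<integral>\<^sup>+\<omega>. ennreal D * ennreal (w (\<omega> (Suc k))) \<partial>M x)"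
        using D(1) w(2) by (simp add: ennreal_mult)
      also have "\<dots> = ennreal D * W (Suc k)"
        unfolding W_def using measurable_compose[OF markov_family_measurable_coordinate[OF mf] w(1)]
        by (intro nn_integral_cmult) simp
      also have "ennreal (2 * 2 powr p) * (ennreal D * W (Suc k)) = ennreal (a k)"
        using W_finite[of "Suc k"] D(1) unfolding a_def by (simp add: ennreal_mult mult.assoc)
      finally show ?thesis .
    qed
    show "(\<Sum>k<n. a k) \<le> 2 * 2 powr p * D * (A + B) * (real n + 1)" for n
    proof -
      have "(\<Sum>k<n. enn2real (W (Suc k))) \<le> (\<Sum>k<Suc n. enn2real (W k))"
        by (simp only: sum.lessThan_Suc_shift) simp
      also have "\<dots> = enn2real (\<Sum>k<Suc n. W k)"
        by (intro enn2real_sum[symmetric, unfolded comp_def] W_finite)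
      also have "\<dots> \<le> enn2real (ennreal (A + real (Suc n) * B))"
        unfolding W_def by (rule enn2real_mono[OF sums ennreal_less_top])
      also have "\<dots> = A + real (Suc n) * B"
        using AB by (intro enn2real_ennreal) simp
      also have "\<dots> \<le> (A + B) * (real n + 1)"
        using AB by (simp add: algebra_simps)
      finally have "(\<Sum>k<n. a k) \<le> 2 * 2 powr p * D * ((A + B) * (real n + 1))"
        unfolding a_def using D(1) by (simp add: sum_distrib_left[symmetric] mult_left_mono)
      then show ?thesis by (simp only: mult.assoc)
    qed
  qed
qed

lemma markov_increment_linear_moment_growth:
  fixes u g :: "'a::polish_space \<Rightarrow> real"
  assumes mf: "markov_family M"
    and u: "u \<in> borel_measurable borel" "\<And>y. 0 \<le> u y" "\<And>y. integrable (M y) (\<lambda>\<omega>. u (\<omega> 1))"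
    and bdd: "bdd_below (range (\<lambda>y. u y - Pop M u y))"
    and p: "1 \<le> p" and g: "g \<in> Espace M u p"
  shows "linear_moment_growth p (M x) (\<lambda>k \<omega>. g (\<omega> (Suc k)) - Pop M g (\<omega> k))"
proof -
  \<comment> \<open>\<open>Bconst M u\<close> may be negative, while the telescoping bound needs a nonnegative constant\<close>
  define c where "c = max (Bconst M u) 0"
  define w where "w y = u y - Pop M u y + c" for y
  have c0: "0 \<le> c"
    unfolding c_def by simp
  have wfun_le: "wfun M u y \<le> w y" for y
    unfolding wfun_def w_def c_def by simp
  have w1: "1 \<le> w y" for y
    using wfun_ge_one[OF bdd, of y] wfun_le[of y] by linarith
  have w_meas: "w \<in> borel_measurable borel"
    unfolding w_def using u(1) measurable_Pop[OF mf u(1)] by measurable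
  have w_int: "integrable (M y) (\<lambda>\<omega>. w (\<omega> 1))" for y
  proof -
    interpret prob_space "M y" by (rule markov_family_prob_space[OF mf])
    have w_le: "\<bar>w z\<bar> \<le> u z + c" for z
      using w1[of z] Pop_nonneg[of u M z, OF u(2)] unfolding w_def by simp
    have "integrable (M y) (\<lambda>\<omega>. u (\<omega> 1) + c)"
      using u(3) by simp
    then show ?thesis
    proof (rule Bochner_Integration.integrable_bound)
      show "(\<lambda>\<omega>. w (\<omega> 1)) \<in> borel_measurable (M y)"
        using measurable_compose[OF markov_family_measurable_coordinate[OF mf] w_meas] .
      show "AE \<omega> in M y. norm (w (\<omega> 1)) \<le> norm (u (\<omega> 1) + c)"
        by (intro AE_I2) (simp add: order_trans[OF w_le abs_ge_self])
    qed
  qed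
  have gF: "g \<in> Fspace p (wfun M u)" and p0: "0 < p"
    using g p unfolding Espace_def by auto
  then have g_meas: "g \<in> borel_measurable borel"
    unfolding Fspace_def by blast
  obtain D where D: "0 \<le> D" "\<And>y. (\<bar>g y\<bar> + 1) powr p \<le> D * wfun M u y"
    using Fspace_shifted_powr_le[OF gF p0 wfun_ge_one[OF bdd]] by blast
  have gw: "(\<bar>g y\<bar> + 1) powr p \<le> D * w y" for y
    using D(2)[of y] mult_left_mono[OF wfun_le D(1)] by (rule order_trans)
  have "Pop M u y \<le> u y + c" for y
    using w1[of y] unfolding w_def by simp
  then have sums: "(\<Sum>k<n. \<integral>\<^sup>+\<omega>. ennreal (w (\<omega> k)) \<partial>M x) \<le> ennreal (u x + real n * c)" for n
    unfolding w_def by (rule markov_drift_sum_le[OF mf u c0])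
  show ?thesis
    using w1 u(2)[of x] c0
    by (intro markov_increment_linear_moment_growth_of_weight[OF mf p w_meas _ w_int g_meas D(1) gw sums])
      (auto intro: order_trans[OF zero_le_one])
qed

theorem mainTheorem19:
  fixes M :: "'a::polish_space \<Rightarrow> (nat \<Rightarrow> 'a) measure"
    and \<tau> :: "(nat \<Rightarrow> 'a) \<Rightarrow> enat"
    and u g :: "'a \<Rightarrow> real" and \<alpha> :: real and x :: 'a
  assumes "markov_family M"
    and "nat_stopping_time \<tau>"
    and "theta_compatible M \<tau>"
    and "\<forall>y. (\<integral>\<^sup>+\<omega>. ennreal_of_enat (\<tau> \<omega>) \<partial>M y) < \<infinity>"
    and "drift_function M \<tau> u"
    and "\<alpha> > 0"
    and "g \<in> Espace M u (2 + \<alpha>)"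
  defines "h \<equiv> (\<lambda>k \<omega>. g (\<omega> (Suc k)) - Pop M g (\<omega> k))"
  shows "(\<forall>\<epsilon>>0.
           ((\<lambda>n. (1 / real n) * (\<Sum>k<n. \<integral>\<omega>. (if \<bar>h k \<omega>\<bar> \<ge> \<epsilon> * sqrt (real n) then (h k \<omega>)\<^sup>2 else 0) \<partial>M x))
              \<longlonglongrightarrow> 0) \<and>
           summable (\<lambda>n. (1 / sqrt (real (Suc n))) *
              (\<integral>\<omega>. (if \<bar>h (Suc n) \<omega>\<bar> \<ge> \<epsilon> * sqrt (real (Suc n)) then \<bar>h (Suc n) \<omega>\<bar> else 0) \<partial>M x)))
         \<and> (\<exists>\<delta>>0. summable (\<lambda>n. (1 / (real (Suc n))\<^sup>2) *
              (\<integral>\<omega>. (if \<bar>h (Suc n) \<omega>\<bar> \<le> \<delta> * sqrt (real (Suc n)) then (h (Suc n) \<omega>) ^ 4 else 0) \<partial>M x)))"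
proof -
  have mf: "markov_family M" and \<alpha>: "0 < \<alpha>" and g: "g \<in> Espace M u (2 + \<alpha>)"
    using assms(1,6,7) .
  have u: "u \<in> borel_measurable borel" "\<And>y. 0 \<le> u y" "\<And>y. integrable (M y) (\<lambda>\<omega>. u (\<omega> 1))"
    and bdd: "bdd_below (range (\<lambda>y. u y - Pop M u y))"
    using assms(5) unfolding drift_function_def by (auto intro: order_trans[OF zero_le_one])
  have N: "prob_space (M x)"
    by (rule markov_family_prob_space[OF mf])
  have h_meas: "h k \<in> borel_measurable (M x)" for k
    using g measurable_Pop[of M g] mf
    unfolding h_def Espace_def Fspace_def
    by (auto intro!: borel_measurable_diff measurable_compose[OF markov_family_measurable_coordinate[OF mf]])
  have growth: "linear_moment_growth (2 + \<alpha>) (M x) h"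
    unfolding h_def using \<alpha> by (intro markov_increment_linear_moment_growth[OF mf u bdd _ g]) simp
  have growth_Suc: "linear_moment_growth (2 + \<alpha>) (M x) (\<lambda>n. h (Suc n))"
    by (rule linear_moment_growth_Suc[OF growth])
  show ?thesis
    using lindeberg_average_tendsto_zero[OF N \<alpha> h_meas growth]
      tail_series_summable[OF N \<alpha> h_meas growth_Suc]
      truncated_fourth_moment_series_summable[OF N \<alpha> h_meas growth_Suc]
    by (intro conjI allI impI exI[of _ 1]) simp_all
qed

end
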